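(* Let $A\in\Theta(n,r)$, $\nu=\mathrm{co}(A)$, and $1\le i\le n-1$. Write $S=S_0(n,r)$. (1) Suppose $\nu_{i+1}\ge1$. Let $s=\min\{x: a_{xi}>0\}$ (with $s=\infty$ if column $i$ is zero) and $t=\min\{x:a_{x,i+1}>0\}$. Then $e_A=ye_{i,\nu}$ for some $y\in S$ if and only if $s\ge t$. (2) Suppose $\nu_i\ge1$. Let $x_0=\max\{x:a_{xi}>0\}$ and $y_0=\max\{x: a_{x,i+1}>0\}$ (with $y_0=-\infty$ if column $i+1$ is zero). Then $e_A=yf_{i,\nu}$ for some $y\in S$ if and only if $x_0\ge y_0$.
   Context: Setup: Fix positive integers $n,r$ and a field $k$. $\Lambda(n,r)$: compositions of $r$ into $n$ nonnegative parts. $\Theta(n,r)$: $n\times n$ nonnegative integer matrices $A=(a_{ij})$ with entry sum $r$, with row/column-sum vectors $\mathrm{ro}(A),\mathrm{co}(A)$. $E_{ij}$ denotes the elementary matrix. The $0$-Schur algebra $S_0(n,r)$ (specialization at $q=0$ of the $q$-Schur algebra, tensored with $k$) has basis $\{e_A:A\in\Theta(n,r)\}$ (orbits of $GL(V)$ on pairs of $n$-step flags in an $r$-dimensional space) with $e_Ae_B=0$ if $\mathrm{co}(A)\ne\mathrm{ro}(B)$, otherwise $e_Ae_B$ is the unique open orbit among pairs $(f,h)$ with $(f,g)\in e_A,(g,h)\in e_B$ for some $g$. For $\nu\in\Lambda(n,r)$: $e_{i,\nu}$ (defined if $\nu_{i+1}\ge1$) is $e_A$ with $\mathrm{co}(A)=\nu$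 whose only nonzero off-diagonal entry is $1$ at $(i,i+1)$; $f_{i,\nu}$ (defined if $\nu_i\ge1$) is $e_A$ with $\mathrm{co}(A)=\nu$ whose only nonzero off-diagonal entry is $1$ at $(i+1,i)$. Right multiplication rules: if $\mathrm{co}(B)_{i+1}>0$ then $e_Bf_{i}=e_{B+E_{p,i}-E_{p,i+1}}$ with $p=\max\{j:b_{j,i+1}>0\}$; if $\mathrm{co}(B)_i>0$ then $e_Be_i=e_{B-E_{p,i}+E_{p,i+1}}$ with $p=\min\{j:b_{ji}>0\}$ (here $e_i,f_i$ are the generators with row vector $\mathrm{co}(B)$). *)

theory Defs
  imports Main "HOL-Library.Extended_Nat"
begin

text \<open>Matrices are functions nat => nat => nat, indices 1..n, zero outside.
Compositions are functions nat => nat supported on 1..n.\<close>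

type_synonym mat = "nat \<Rightarrow> nat \<Rightarrow> nat"

definition Theta :: "nat \<Rightarrow> nat \<Rightarrow> mat set" where
  "Theta n r = {A. (\<forall>i j. A i j \<noteq> 0 \<longrightarrow> i \<in> {1..n} \<and> j \<in> {1..n})
                  \<and> (\<Sum>i\<in>{1..n}. \<Sum>j\<in>{1..n}. A i j) = r}"

definition Lambda :: "nat \<Rightarrow> nat \<Rightarrow> (nat \<Rightarrow> nat) set" where
  "Lambda n r = {\<nu>. (\<forall>i. \<nu> i \<noteq> 0 \<longrightarrow> i \<in> {1..n}) \<and> (\<Sum>i\<in>{1..n}. \<nu> i) = r}"

definition ro :: "nat \<Rightarrow> mat \<Rightarrow> nat \<Rightarrow> nat" where
  "ro n A i = (\<Sum>j\<in>{1..n}. A i j)"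

definition co :: "nat \<Rightarrow> mat \<Rightarrow> nat \<Rightarrow> nat" where
  "co n A j = (\<Sum>i\<in>{1..n}. A i j)"

definition Emat :: "nat \<Rightarrow> nat \<Rightarrow> mat" where
  "Emat p q = (\<lambda>i j. if i = p \<and> j = q then 1 else 0)"

text \<open>Elements of S_0(n,r): k-linear combinations of basis elements e_A, A in Theta(n,r),
represented as coefficient functions supported on Theta(n,r).\<close>

definition Salg :: "nat \<Rightarrow> nat \<Rightarrow> (mat \<Rightarrow> 'k::field) set" where
  "Salg n r = {y. \<forall>B. y B \<noteq> 0 \<longrightarrow> B \<in> Theta n r}"

definition basis_e :: "mat \<Rightarrow> (mat \<Rightarrow> 'k::field)" where
  "basis_e A = (\<lambda>B. if B = A then 1 else 0)"

text \<open>The matrix of e_{i,nu}: column vector nu, only off-diagonal entry 1 at (i,i+1).\<close>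
definition emat_gen :: "nat \<Rightarrow> nat \<Rightarrow> (nat \<Rightarrow> nat) \<Rightarrow> mat" where
  "emat_gen n i \<nu> = (\<lambda>a b.
     if a = b \<and> a \<in> {1..n} then (if a = i + 1 then \<nu> a - 1 else \<nu> a)
     else if a = i \<and> b = i + 1 then 1 else 0)"

text \<open>The matrix of f_{i,nu}: column vector nu, only off-diagonal entry 1 at (i+1,i).\<close>
definition fmat_gen :: "nat \<Rightarrow> nat \<Rightarrow> (nat \<Rightarrow> nat) \<Rightarrow> mat" where
  "fmat_gen n i \<nu> = (\<lambda>a b.
     if a = b \<and> a \<in> {1..n} then (if a = i then \<nu> a - 1 else \<nu> a)
     else if a = i + 1 \<and> b = i then 1 else 0)"

text \<open>Product e_B * e_{i,nu} of basis elements (right multiplication rule).\<close>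
definition mult_basis_e :: "nat \<Rightarrow> mat \<Rightarrow> nat \<Rightarrow> (nat \<Rightarrow> nat) \<Rightarrow> (mat \<Rightarrow> 'k::field)" where
  "mult_basis_e n B i \<nu> =
     (if co n B = ro n (emat_gen n i \<nu>) \<and> co n B i > 0 then
        (let p = Min {j. B j i > 0} in
         basis_e (\<lambda>a b. B a b - Emat p i a b + Emat p (i+1) a b))
      else (\<lambda>_. 0))"

text \<open>Product e_B * f_{i,nu} of basis elements (right multiplication rule).\<close>
definition mult_basis_f :: "nat \<Rightarrow> mat \<Rightarrow> nat \<Rightarrow> (nat \<Rightarrow> nat) \<Rightarrow> (mat \<Rightarrow> 'k::field)" where
  "mult_basis_f n B i \<nu> =
     (if co n B = ro n (fmat_gen n i \<nu>) \<and> co n B (i+1) > 0 then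
        (let p = Max {j. B j (i+1) > 0} in
         basis_e (\<lambda>a b. B a b + Emat p i a b - Emat p (i+1) a b))
      else (\<lambda>_. 0))"

definition rmult_e :: "nat \<Rightarrow> nat \<Rightarrow> (mat \<Rightarrow> 'k::field) \<Rightarrow> nat \<Rightarrow> (nat \<Rightarrow> nat) \<Rightarrow> (mat \<Rightarrow> 'k)" where
  "rmult_e n r y i \<nu> = (\<lambda>C. \<Sum>B\<in>Theta n r. y B * mult_basis_e n B i \<nu> C)"

definition rmult_f :: "nat \<Rightarrow> nat \<Rightarrow> (mat \<Rightarrow> 'k::field) \<Rightarrow> nat \<Rightarrow> (nat \<Rightarrow> nat) \<Rightarrow> (mat \<Rightarrow> 'k)" where
  "rmult_f n r y i \<nu> = (\<lambda>C. \<Sum>B\<in>Theta n r. y B * mult_basis_f n B i \<nu> C)"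

end

(* The product of e_B with e_{i,nu} (resp. f_{i,nu}) is the basis element obtained from B by
   moving one unit from the topmost nonzero entry of column i to column i+1 of the same row
   (resp. from the bottommost nonzero entry of column i+1 to column i).  So e_A lies in
   S e_{i,nu} exactly when A arises this way: when some row p has a_{p,i+1} > 0 and column i of A
   vanishes above p.  Undoing the move in row p gives the required B, and the condition is a
   rewording of s >= t.  The case of f_{i,nu} is the mirror image, with "above" replaced by
   "below". *)

theory Submission
  imports Defs
begin

lemma Theta_entry_eq_0:
  "A \<in> Theta n r \<Longrightarrow> i \<notin> {1..n} \<or> j \<notin> {1..n} \<Longrightarrow> A i j = 0"
  unfolding Theta_def by blast

lemma Theta_entry_le:
  assumes "A \<in> Theta n r"
  shows "A i j \<le> r"
proof (cases "i \<in> {1..n} \<and> j \<in> {1..n}")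
  case True
  have "A i j \<le> (\<Sum>j\<in>{1..n}. A i j)"
    using True by (intro member_le_sum) auto
  also have "\<dots> \<le> (\<Sum>i\<in>{1..n}. \<Sum>j\<in>{1..n}. A i j)"
    using True by (intro member_le_sum[where f = "\<lambda>i. \<Sum>j\<in>{1..n}. A i j"]) auto
  finally show ?thesis
    using assms unfolding Theta_def by simp
next
  case False
  then show ?thesis using Theta_entry_eq_0[OF assms] by auto
qed

lemma finite_Theta: "finite (Theta n r)"
proof -
  define rows where
    "rows = {g :: nat \<Rightarrow> nat. \<forall>j. (j \<in> {1..n} \<longrightarrow> g j \<in> {0..r}) \<and> (j \<notin> {1..n} \<longrightarrow> g j = 0)}"
  have "finite rows"
    unfolding rows_def by (rule finite_set_of_finite_funs) auto
  then have "finite {A :: mat. \<forall>i. (i \<in> {1..n} \<longrightarrow> A i \<in> rows) \<and> (i \<notin> {1..n} \<longrightarrow> A i = (\<lambda>_. 0))}"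
    by (intro finite_set_of_finite_funs) auto
  moreover have "Theta n r \<subseteq> {A. \<forall>i. (i \<in> {1..n} \<longrightarrow> A i \<in> rows) \<and> (i \<notin> {1..n} \<longrightarrow> A i = (\<lambda>_. 0))}"
    using Theta_entry_eq_0 Theta_entry_le unfolding rows_def by fastforce
  ultimately show ?thesis
    by (rule finite_subset[rotated])
qed

lemma finite_column_support:
  assumes "A \<in> Theta n r"
  shows "finite {x. 0 < A x j}"
proof (rule finite_subset)
  show "{x. 0 < A x j} \<subseteq> {1..n}"
    using Theta_entry_eq_0[OF assms] by (auto intro: ccontr)
qed simp

lemma co_eq_0_outside: "A \<in> Theta n r \<Longrightarrow> j \<notin> {1..n} \<Longrightarrow> co n A j = 0"
  unfolding co_def by (auto dest: Theta_entry_eq_0)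

lemma co_pos_iff:
  assumes "A \<in> Theta n r"
  shows "0 < co n A j \<longleftrightarrow> (\<exists>x. 0 < A x j)"
proof -
  have "co n A j = 0 \<longleftrightarrow> (\<forall>x\<in>{1..n}. A x j = 0)"
    unfolding co_def by simp
  then show ?thesis
    using Theta_entry_eq_0[OF assms] by (metis bot_nat_0.not_eq_extremum)
qed

lemma Min_column_support_eq_iff:
  assumes A: "A \<in> Theta n r"
  shows "0 < co n A j \<and> Min {x. 0 < A x j} = p \<longleftrightarrow> 0 < A p j \<and> (\<forall>x<p. A x j = 0)"
proof
  assume h: "0 < co n A j \<and> Min {x. 0 < A x j} = p"
  then have "{x. 0 < A x j} \<noteq> {}"
    using co_pos_iff[OF A] by auto
  then have "0 < A p j \<and> (\<forall>x. 0 < A x j \<longrightarrow> p \<le> x)"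
    using h Min_eq_iff[OF finite_column_support[OF A]] by auto
  then show "0 < A p j \<and> (\<forall>x<p. A x j = 0)"
    using leD by blast
next
  assume h: "0 < A p j \<and> (\<forall>x<p. A x j = 0)"
  then have "Min {x. 0 < A x j} = p"
    by (intro Min_eqI finite_column_support[OF A]) (auto simp: not_less[symmetric])
  then show "0 < co n A j \<and> Min {x. 0 < A x j} = p"
    using h co_pos_iff[OF A] by blast
qed

lemma Max_column_support_eq_iff:
  assumes A: "A \<in> Theta n r"
  shows "0 < co n A j \<and> Max {x. 0 < A x j} = p \<longleftrightarrow> 0 < A p j \<and> (\<forall>x>p. A x j = 0)"
proof
  assume h: "0 < co n A j \<and> Max {x. 0 < A x j} = p"
  then have "{x. 0 < A x j} \<noteq> {}"
    using co_pos_iff[OF A] by auto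
  then have "0 < A p j \<and> (\<forall>x. 0 < A x j \<longrightarrow> x \<le> p)"
    using h Max_eq_iff[OF finite_column_support[OF A]] by auto
  then show "0 < A p j \<and> (\<forall>x>p. A x j = 0)"
    using leD by blast
next
  assume h: "0 < A p j \<and> (\<forall>x>p. A x j = 0)"
  then have "Max {x. 0 < A x j} = p"
    by (intro Max_eqI finite_column_support[OF A]) (auto simp: not_less[symmetric])
  then show "0 < co n A j \<and> Max {x. 0 < A x j} = p"
    using h co_pos_iff[OF A] by blast
qed

section \<open>Moving a unit within a row\<close>

definition move_unit :: "mat \<Rightarrow> nat \<Rightarrow> nat \<Rightarrow> nat \<Rightarrow> mat" where
  "move_unit A p q q' = (\<lambda>a b. A a b - Emat p q a b + Emat p q' a b)"

lemma move_unit_add_Emat: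
  "1 \<le> A p q \<Longrightarrow> q \<noteq> q' \<Longrightarrow> move_unit A p q q' a b + Emat p q a b = A a b + Emat p q' a b"
  unfolding move_unit_def Emat_def by auto

lemma move_unit_move_unit:
  "1 \<le> A p q' \<Longrightarrow> q \<noteq> q' \<Longrightarrow> move_unit (move_unit A p q' q) p q q' = A"
  unfolding move_unit_def Emat_def by (intro ext) auto

lemma sum_Emat_column: "p \<in> {1..n} \<Longrightarrow> (\<Sum>a\<in>{1..n}. Emat p q a j) = (if j = q then 1 else 0)"
  unfolding Emat_def by (simp add: sum.delta)

lemma sum_Emat:
  assumes "p \<in> {1..n}" "q \<in> {1..n}"
  shows "(\<Sum>a\<in>{1..n}. \<Sum>b\<in>{1..n}. Emat p q a b) = 1"
proof -
  have "(\<Sum>a\<in>{1..n}. \<Sum>b\<in>{1..n}. Emat p q a b) = (\<Sum>a\<in>{1..n}. if a = p then 1 else 0)"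
    using assms(2) by (intro sum.cong) (auto simp: Emat_def)
  then show ?thesis
    using assms(1) by simp
qed

lemma move_unit_Theta:
  assumes A: "A \<in> Theta n r" and "1 \<le> A p q" "q \<noteq> q'" "q' \<in> {1..n}"
  shows "move_unit A p q q' \<in> Theta n r"
proof -
  have pq: "p \<in> {1..n}" "q \<in> {1..n}"
    using assms(2) Theta_entry_eq_0[OF A, of p q] by auto
  have "(\<Sum>a\<in>{1..n}. \<Sum>b\<in>{1..n}. move_unit A p q q' a b) + 1
      = (\<Sum>a\<in>{1..n}. \<Sum>b\<in>{1..n}. move_unit A p q q' a b + Emat p q a b)"
    using sum_Emat[OF pq] by (simp add: sum.distrib)
  also have "\<dots> = (\<Sum>a\<in>{1..n}. \<Sum>b\<in>{1..n}. A a b + Emat p q' a b)"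
    using move_unit_add_Emat[of A p q q', OF assms(2,3)] by simp
  also have "\<dots> = r + 1"
    using sum_Emat[OF pq(1) assms(4)] A by (simp add: sum.distrib Theta_def)
  finally have "(\<Sum>a\<in>{1..n}. \<Sum>b\<in>{1..n}. move_unit A p q q' a b) = r"
    by simp
  moreover have "a \<in> {1..n} \<and> b \<in> {1..n}" if nz: "move_unit A p q q' a b \<noteq> 0" for a b
  proof (cases "a = p \<and> b = q'")
    case True
    then show ?thesis using pq assms(4) by simp
  next
    case False
    then have "A a b \<noteq> 0"
      using nz by (auto simp: move_unit_def Emat_def)
    then show ?thesis
      using Theta_entry_eq_0[OF A, of a b] by argo
  qed
  ultimately show ?thesis
    unfolding Theta_def by blast
qed

lemma co_move_unit:
  assumes A: "A \<in> Theta n r" and "1 \<le> A p q" "q \<noteq> q'"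
  shows "co n (move_unit A p q q') j + (if j = q then 1 else 0) = co n A j + (if j = q' then 1 else 0)"
proof -
  have p: "p \<in> {1..n}"
    using assms(2) Theta_entry_eq_0[OF A, of p q] by auto
  have "co n (move_unit A p q q') j + (if j = q then 1 else 0)
      = (\<Sum>a\<in>{1..n}. move_unit A p q q' a j + Emat p q a j)"
    using sum_Emat_column[OF p] by (simp add: sum.distrib co_def)
  also have "\<dots> = (\<Sum>a\<in>{1..n}. A a j + Emat p q' a j)"
    using move_unit_add_Emat[of A p q q', OF assms(2,3)] by simp
  also have "\<dots> = co n A j + (if j = q' then 1 else 0)"
    using sum_Emat_column[OF p] by (simp add: sum.distrib co_def)
  finally show ?thesis .
qed

text \<open>The relation \<open>R\<close> says which rows lie on the far side of \<open>p\<close>: rows above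
  (\<open>R = (<)\<close>) for \<open>e\<^sub>i\<close>, rows below (\<open>R = (>)\<close>) for \<open>f\<^sub>i\<close>.\<close>

lemma ex_move_unit_extremal_iff:
  assumes A: "A \<in> Theta n r" and "q \<noteq> q'" "q \<in> {1..n}" and irrefl: "\<And>x. \<not> R x x"
  shows "(\<exists>B\<in>Theta n r. (\<forall>j. co n B j + (if j = q' then 1 else 0) = co n A j + (if j = q then 1 else 0))
            \<and> (\<exists>p. 0 < B p q \<and> (\<forall>x. R x p \<longrightarrow> B x q = 0) \<and> A = move_unit B p q q'))
     \<longleftrightarrow> (\<exists>p. 0 < A p q' \<and> (\<forall>x. R x p \<longrightarrow> A x q = 0))"
  (is "?moved \<longleftrightarrow> _")
proof
  assume ?moved
  then obtain B p where far: "\<forall>x. R x p \<longrightarrow> B x q = 0" and A_eq: "A = move_unit B p q q'"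
    by blast
  have "0 < A p q'"
    using A_eq \<open>q \<noteq> q'\<close> by (simp add: move_unit_def Emat_def)
  moreover have "A x q = 0" if "R x p" for x
    using A_eq far that irrefl[of p] by (auto simp: move_unit_def Emat_def)
  ultimately show "\<exists>p. 0 < A p q' \<and> (\<forall>x. R x p \<longrightarrow> A x q = 0)"
    by blast
next
  assume "\<exists>p. 0 < A p q' \<and> (\<forall>x. R x p \<longrightarrow> A x q = 0)"
  then obtain p where p: "1 \<le> A p q'" and far: "\<forall>x. R x p \<longrightarrow> A x q = 0"
    by (auto simp: Suc_le_eq)
  define B where "B = move_unit A p q' q"
  have "B \<in> Theta n r"
    unfolding B_def using move_unit_Theta[OF A p] assms(2,3) by simp
  moreover have "\<forall>j. co n B j + (if j = q' then 1 else 0) = co n A j + (if j = q then 1 else 0)"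
    unfolding B_def using co_move_unit[OF A p] assms(2) by simp
  moreover have "0 < B p q"
    unfolding B_def using \<open>q \<noteq> q'\<close> by (simp add: move_unit_def Emat_def)
  moreover have "\<forall>x. R x p \<longrightarrow> B x q = 0"
    unfolding B_def using far irrefl[of p] by (auto simp: move_unit_def Emat_def)
  moreover have "A = move_unit B p q q'"
    unfolding B_def using move_unit_move_unit[of A p q' q, OF p assms(2)] by simp
  ultimately show ?moved
    by blast
qed

lemma add_diff_Emat_eq_move_unit:
  "q \<noteq> q' \<Longrightarrow> (\<lambda>a b. B a b + Emat p q' a b - Emat p q a b) = move_unit B p q q'"
  unfolding move_unit_def Emat_def by (intro ext) auto

section \<open>Products with the generators\<close>

lemma basis_e_apply_neq_0: "(basis_e A B :: 'k::field) \<noteq> 0 \<Longrightarrow> A = B"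
  unfolding basis_e_def by (simp split: if_splits)

lemma basis_e_self [simp]: "(basis_e A A :: 'k::field) = 1"
  unfolding basis_e_def by simp

lemma basis_e_eq_iff: "(basis_e A :: mat \<Rightarrow> 'k::field) = basis_e B \<longleftrightarrow> A = B"
proof
  assume "basis_e A = (basis_e B :: mat \<Rightarrow> 'k)"
  then have "(basis_e B A :: 'k) = basis_e A A"
    by (rule fun_cong[symmetric])
  then have "(basis_e B A :: 'k) \<noteq> 0"
    by simp
  then show "A = B"
    by (auto dest: basis_e_apply_neq_0)
qed simp

lemma basis_e_Salg: "B \<in> Theta n r \<Longrightarrow> basis_e B \<in> Salg n r"
  unfolding Salg_def basis_e_def by auto

lemma ex_combination_eq_basis_e_iff:
  fixes m :: "mat \<Rightarrow> mat \<Rightarrow> 'k::field"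
  assumes m_basis: "\<And>B C. m B C \<noteq> 0 \<Longrightarrow> m B = basis_e C"
  shows "(\<exists>y\<in>Salg n r. (\<lambda>C. \<Sum>B\<in>Theta n r. y B * m B C) = basis_e A)
     \<longleftrightarrow> (\<exists>B\<in>Theta n r. m B = basis_e A)"
proof
  assume "\<exists>y\<in>Salg n r. (\<lambda>C. \<Sum>B\<in>Theta n r. y B * m B C) = basis_e A"
  then obtain y where "(\<lambda>C. \<Sum>B\<in>Theta n r. y B * m B C) = basis_e A"
    by blast
  then have "(\<Sum>B\<in>Theta n r. y B * m B A) = basis_e A A"
    by (rule fun_cong)
  then have "(\<Sum>B\<in>Theta n r. y B * m B A) \<noteq> 0"
    by simp
  then obtain B where "B \<in> Theta n r" "y B * m B A \<noteq> 0"
    by (meson sum.not_neutral_contains_not_neutral)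
  then show "\<exists>B\<in>Theta n r. m B = basis_e A"
    using m_basis by (metis mult_zero_right)
next
  assume "\<exists>B\<in>Theta n r. m B = basis_e A"
  then obtain B where B: "B \<in> Theta n r" "m B = basis_e A"
    by blast
  have "(\<lambda>C. \<Sum>B'\<in>Theta n r. basis_e B B' * m B' C) = m B"
  proof
    fix C
    have "(\<Sum>B'\<in>Theta n r. basis_e B B' * m B' C) = (\<Sum>B'\<in>Theta n r. if B' = B then m B C else 0)"
      by (intro sum.cong) (auto simp: basis_e_def)
    then show "(\<Sum>B'\<in>Theta n r. basis_e B B' * m B' C) = m B C"
      using B(1) finite_Theta by simp
  qed
  then show "\<exists>y\<in>Salg n r. (\<lambda>C. \<Sum>B\<in>Theta n r. y B * m B C) = basis_e A"
    using basis_e_Salg[OF B(1)] B(2) by (intro bexI[of _ "basis_e B"]) simp_all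
qed

lemma zero_neq_basis_e: "(\<lambda>_. 0) \<noteq> (basis_e A :: mat \<Rightarrow> 'k::field)"
  using fun_cong[of "\<lambda>_. 0" "basis_e A :: mat \<Rightarrow> 'k" A] by auto

lemma if_basis_e_eq_basis_e:
  "(if P then basis_e X else (\<lambda>_. 0)) C \<noteq> (0 :: 'k::field)
   \<Longrightarrow> (if P then basis_e X else (\<lambda>_. 0)) = basis_e C"
  by (cases P) (auto dest: basis_e_apply_neq_0)

lemma if_basis_e_eq_basis_e_iff:
  "(if P then basis_e X else (\<lambda>_. 0)) = (basis_e A :: mat \<Rightarrow> 'k::field) \<longleftrightarrow> P \<and> X = A"
  by (cases P) (simp_all add: basis_e_eq_iff zero_neq_basis_e)

lemma mult_basis_e_eq_basis_e:
  "(mult_basis_e n B i \<nu> C :: 'k::field) \<noteq> 0 \<Longrightarrow> mult_basis_e n B i \<nu> = basis_e C"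
  unfolding mult_basis_e_def Let_def by (rule if_basis_e_eq_basis_e)

lemma mult_basis_f_eq_basis_e:
  "(mult_basis_f n B i \<nu> C :: 'k::field) \<noteq> 0 \<Longrightarrow> mult_basis_f n B i \<nu> = basis_e C"
  unfolding mult_basis_f_def Let_def by (rule if_basis_e_eq_basis_e)

lemma mult_basis_e_eq_basis_e_iff:
  assumes B: "B \<in> Theta n r"
  shows "mult_basis_e n B i \<nu> = (basis_e A :: mat \<Rightarrow> 'k::field)
     \<longleftrightarrow> co n B = ro n (emat_gen n i \<nu>)
       \<and> (\<exists>p. 0 < B p i \<and> (\<forall>x<p. B x i = 0) \<and> A = move_unit B p i (i+1))"
proof -
  let ?p = "Min {x. 0 < B x i}"
  have unfold: "mult_basis_e n B i \<nu> = (basis_e A :: mat \<Rightarrow> 'k)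
     \<longleftrightarrow> co n B = ro n (emat_gen n i \<nu>) \<and> 0 < co n B i \<and> move_unit B ?p i (i+1) = A"
    by (simp only: mult_basis_e_def Let_def move_unit_def if_basis_e_eq_basis_e_iff conj_assoc)
  have "0 < co n B i \<and> move_unit B ?p i (i+1) = A
    \<longleftrightarrow> (\<exists>p. 0 < B p i \<and> (\<forall>x<p. B x i = 0) \<and> A = move_unit B p i (i+1))"
  proof
    assume h: "0 < co n B i \<and> move_unit B ?p i (i+1) = A"
    then have "0 < B ?p i \<and> (\<forall>x<?p. B x i = 0)"
      using Min_column_support_eq_iff[OF B, of i ?p] by blast
    with h show "\<exists>p. 0 < B p i \<and> (\<forall>x<p. B x i = 0) \<and> A = move_unit B p i (i+1)"
      by (intro exI[of _ ?p]) argo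
  next
    assume "\<exists>p. 0 < B p i \<and> (\<forall>x<p. B x i = 0) \<and> A = move_unit B p i (i+1)"
    then obtain p where "0 < B p i \<and> (\<forall>x<p. B x i = 0)" "A = move_unit B p i (i+1)"
      by blast
    with Min_column_support_eq_iff[OF B, of i p]
    show "0 < co n B i \<and> move_unit B ?p i (i+1) = A"
      by simp
  qed
  with unfold show ?thesis
    by simp
qed

lemma mult_basis_f_eq_basis_e_iff:
  assumes B: "B \<in> Theta n r"
  shows "mult_basis_f n B i \<nu> = (basis_e A :: mat \<Rightarrow> 'k::field)
     \<longleftrightarrow> co n B = ro n (fmat_gen n i \<nu>)
       \<and> (\<exists>p. 0 < B p (i+1) \<and> (\<forall>x>p. B x (i+1) = 0) \<and> A = move_unit B p (i+1) i)"
proof -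
  let ?p = "Max {x. 0 < B x (i+1)}"
  have move: "(\<lambda>a b. B a b + Emat p i a b - Emat p (i+1) a b) = move_unit B p (i+1) i" for p
    by (rule add_diff_Emat_eq_move_unit) simp
  have unfold: "mult_basis_f n B i \<nu> = (basis_e A :: mat \<Rightarrow> 'k)
     \<longleftrightarrow> co n B = ro n (fmat_gen n i \<nu>) \<and> 0 < co n B (i+1) \<and> move_unit B ?p (i+1) i = A"
    by (simp only: mult_basis_f_def Let_def move if_basis_e_eq_basis_e_iff conj_assoc)
  have "0 < co n B (i+1) \<and> move_unit B ?p (i+1) i = A
    \<longleftrightarrow> (\<exists>p. 0 < B p (i+1) \<and> (\<forall>x>p. B x (i+1) = 0) \<and> A = move_unit B p (i+1) i)"
  proof
    assume h: "0 < co n B (i+1) \<and> move_unit B ?p (i+1) i = A"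
    then have "0 < B ?p (i+1) \<and> (\<forall>x>?p. B x (i+1) = 0)"
      using Max_column_support_eq_iff[OF B, of "i+1" ?p] by blast
    with h show "\<exists>p. 0 < B p (i+1) \<and> (\<forall>x>p. B x (i+1) = 0) \<and> A = move_unit B p (i+1) i"
      by (intro exI[of _ ?p]) argo
  next
    assume "\<exists>p. 0 < B p (i+1) \<and> (\<forall>x>p. B x (i+1) = 0) \<and> A = move_unit B p (i+1) i"
    then obtain p where "0 < B p (i+1) \<and> (\<forall>x>p. B x (i+1) = 0)" "A = move_unit B p (i+1) i"
      by blast
    with Max_column_support_eq_iff[OF B, of "i+1" p]
    show "0 < co n B (i+1) \<and> move_unit B ?p (i+1) i = A"
      by simp
  qed
  with unfold show ?thesis
    by simp
qed

text \<open>Both generator matrices are a diagonal matrix with one unit moved from \<open>(q,q)\<close> up or down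
  to \<open>(p,q)\<close>; this is their common row-sum computation.\<close>

lemma ro_diag_unit_moved:
  assumes "p \<in> {1..n}" "q \<in> {1..n}" "p \<noteq> q" "1 \<le> \<nu> q" and supp: "\<And>j. j \<notin> {1..n} \<Longrightarrow> \<nu> j = 0"
  shows "ro n (\<lambda>a b. if a = b \<and> a \<in> {1..n} then (if a = q then \<nu> a - 1 else \<nu> a)
                    else if a = p \<and> b = q then 1 else 0) j + (if j = q then 1 else 0)
       = \<nu> j + (if j = p then 1 else 0)"
proof -
  define d where "d = (if j \<in> {1..n} then (if j = q then \<nu> j - 1 else \<nu> j) else 0)"
  have "ro n (\<lambda>a b. if a = b \<and> a \<in> {1..n} then (if a = q then \<nu> a - 1 else \<nu> a)
                    else if a = p \<and> b = q then 1 else 0) j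
      = (\<Sum>b\<in>{1..n}. (if b = j then d else 0) + (if j = p \<and> b = q then 1 else 0))"
    unfolding ro_def d_def using \<open>p \<noteq> q\<close> by (intro sum.cong) auto
  also have "\<dots> = d + (if j = p then 1 else 0)"
    using \<open>q \<in> {1..n}\<close> by (simp add: sum.distrib d_def)
  finally show ?thesis
    using assms unfolding d_def by auto
qed

lemma ro_emat_gen:
  assumes "1 \<le> i" "i < n" "1 \<le> \<nu> (i+1)" "\<And>j. j \<notin> {1..n} \<Longrightarrow> \<nu> j = 0"
  shows "ro n (emat_gen n i \<nu>) j + (if j = i+1 then 1 else 0) = \<nu> j + (if j = i then 1 else 0)"
  unfolding emat_gen_def using assms by (intro ro_diag_unit_moved) auto

lemma ro_fmat_gen:
  assumes "1 \<le> i" "i < n" "1 \<le> \<nu> i" "\<And>j. j \<notin> {1..n} \<Longrightarrow> \<nu> j = 0"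
  shows "ro n (fmat_gen n i \<nu>) j + (if j = i then 1 else 0) = \<nu> j + (if j = i+1 then 1 else 0)"
  unfolding fmat_gen_def using assms by (intro ro_diag_unit_moved) auto

lemma ex_rmult_e_eq_basis_e_iff:
  assumes A: "A \<in> Theta n r" and i: "1 \<le> i" "i < n" and col: "1 \<le> co n A (i+1)"
  shows "(\<exists>y\<in>(Salg n r :: (mat \<Rightarrow> 'k::field) set). rmult_e n r y i (co n A) = basis_e A)
     \<longleftrightarrow> (\<exists>p. 0 < A p (i+1) \<and> (\<forall>x<p. A x i = 0))"
proof -
  have "co n B j = ro n (emat_gen n i (co n A)) j
    \<longleftrightarrow> co n B j + (if j = i+1 then 1 else 0) = co n A j + (if j = i then 1 else 0)" for B j
    using ro_emat_gen[of i n "co n A" j, OF i col co_eq_0_outside[OF A]] by linarith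
  then have co_iff: "co n B = ro n (emat_gen n i (co n A))
    \<longleftrightarrow> (\<forall>j. co n B j + (if j = i+1 then 1 else 0) = co n A j + (if j = i then 1 else 0))" for B
    unfolding fun_eq_iff by blast
  have "(\<exists>y\<in>(Salg n r :: (mat \<Rightarrow> 'k) set). rmult_e n r y i (co n A) = basis_e A)
     \<longleftrightarrow> (\<exists>B\<in>Theta n r. mult_basis_e n B i (co n A) = (basis_e A :: mat \<Rightarrow> 'k))"
    unfolding rmult_e_def
    by (rule ex_combination_eq_basis_e_iff[where m = "\<lambda>B. mult_basis_e n B i (co n A)"])
      (rule mult_basis_e_eq_basis_e)
  also have "\<dots> \<longleftrightarrow> (\<exists>B\<in>Theta n r.
      (\<forall>j. co n B j + (if j = i+1 then 1 else 0) = co n A j + (if j = i then 1 else 0))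
      \<and> (\<exists>p. 0 < B p i \<and> (\<forall>x<p. B x i = 0) \<and> A = move_unit B p i (i+1)))"
    by (rule bex_cong[OF refl]) (simp only: mult_basis_e_eq_basis_e_iff co_iff)
  also have "\<dots> \<longleftrightarrow> (\<exists>p. 0 < A p (i+1) \<and> (\<forall>x<p. A x i = 0))"
    by (rule ex_move_unit_extremal_iff[OF A, of i "i+1" "(<)"]) (use i in auto)
  finally show ?thesis .
qed

lemma ex_rmult_f_eq_basis_e_iff:
  assumes A: "A \<in> Theta n r" and i: "1 \<le> i" "i < n" and col: "1 \<le> co n A i"
  shows "(\<exists>y\<in>(Salg n r :: (mat \<Rightarrow> 'k::field) set). rmult_f n r y i (co n A) = basis_e A)
     \<longleftrightarrow> (\<exists>p. 0 < A p i \<and> (\<forall>x>p. A x (i+1) = 0))"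
proof -
  have "co n B j = ro n (fmat_gen n i (co n A)) j
    \<longleftrightarrow> co n B j + (if j = i then 1 else 0) = co n A j + (if j = i+1 then 1 else 0)" for B j
    using ro_fmat_gen[of i n "co n A" j, OF i col co_eq_0_outside[OF A]] by linarith
  then have co_iff: "co n B = ro n (fmat_gen n i (co n A))
    \<longleftrightarrow> (\<forall>j. co n B j + (if j = i then 1 else 0) = co n A j + (if j = i+1 then 1 else 0))" for B
    unfolding fun_eq_iff by blast
  have "(\<exists>y\<in>(Salg n r :: (mat \<Rightarrow> 'k) set). rmult_f n r y i (co n A) = basis_e A)
     \<longleftrightarrow> (\<exists>B\<in>Theta n r. mult_basis_f n B i (co n A) = (basis_e A :: mat \<Rightarrow> 'k))"
    unfolding rmult_f_def
    by (rule ex_combination_eq_basis_e_iff[where m = "\<lambda>B. mult_basis_f n B i (co n A)"])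
      (rule mult_basis_f_eq_basis_e)
  also have "\<dots> \<longleftrightarrow> (\<exists>B\<in>Theta n r.
      (\<forall>j. co n B j + (if j = i then 1 else 0) = co n A j + (if j = i+1 then 1 else 0))
      \<and> (\<exists>p. 0 < B p (i+1) \<and> (\<forall>x>p. B x (i+1) = 0) \<and> A = move_unit B p (i+1) i))"
    by (rule bex_cong[OF refl]) (simp only: mult_basis_f_eq_basis_e_iff co_iff)
  also have "\<dots> \<longleftrightarrow> (\<exists>p. 0 < A p i \<and> (\<forall>x>p. A x (i+1) = 0))"
    by (rule ex_move_unit_extremal_iff[OF A, of "i+1" i "\<lambda>x p. p < x"]) (use i in auto)
  finally show ?thesis .
qed

lemma enat_Min_le_iff_ex_before:
  fixes S T :: "nat set"
  assumes "finite S" "finite T" "T \<noteq> {}"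
  shows "enat (Min T) \<le> (if S = {} then \<infinity> else enat (Min S)) \<longleftrightarrow> (\<exists>p\<in>T. \<forall>x<p. x \<notin> S)"
proof
  assume le: "enat (Min T) \<le> (if S = {} then \<infinity> else enat (Min S))"
  have "x \<notin> S" if "x < Min T" for x
  proof
    assume "x \<in> S"
    then have "Min T \<le> Min S" "Min S \<le> x"
      using le \<open>finite S\<close> by (auto split: if_splits)
    with \<open>x < Min T\<close> show False
      by simp
  qed
  then show "\<exists>p\<in>T. \<forall>x<p. x \<notin> S"
    using assms(2,3) by (intro bexI[of _ "Min T"]) auto
next
  assume "\<exists>p\<in>T. \<forall>x<p. x \<notin> S"
  then obtain p where "p \<in> T" and before: "\<forall>x<p. x \<notin> S"
    by blast
  have "p \<le> Min S" if "S \<noteq> {}"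
    using before Min_in[OF \<open>finite S\<close> that] not_le by blast
  moreover have "Min T \<le> p"
    using \<open>p \<in> T\<close> \<open>finite T\<close> by simp
  ultimately show "enat (Min T) \<le> (if S = {} then \<infinity> else enat (Min S))"
    by (cases "S = {}") auto
qed

lemma Max_le_Max_iff_ex_after:
  fixes S T :: "nat set"
  assumes "finite S" "S \<noteq> {}" "finite T"
  shows "(T = {} \<or> Max T \<le> Max S) \<longleftrightarrow> (\<exists>p\<in>S. \<forall>x>p. x \<notin> T)"
proof
  assume le: "T = {} \<or> Max T \<le> Max S"
  have "x \<notin> T" if "Max S < x" for x
  proof
    assume "x \<in> T"
    then have "x \<le> Max T" "Max T \<le> Max S"
      using le \<open>finite T\<close> by auto
    with \<open>Max S < x\<close> show False
      by simp
  qed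
  then show "\<exists>p\<in>S. \<forall>x>p. x \<notin> T"
    using assms(1,2) by (intro bexI[of _ "Max S"]) auto
next
  assume "\<exists>p\<in>S. \<forall>x>p. x \<notin> T"
  then obtain p where "p \<in> S" and after: "\<forall>x>p. x \<notin> T"
    by blast
  have "Max T \<le> p" if "T \<noteq> {}"
    using after Max_in[OF \<open>finite T\<close> that] not_le by blast
  moreover have "p \<le> Max S"
    using \<open>p \<in> S\<close> \<open>finite S\<close> by simp
  ultimately show "T = {} \<or> Max T \<le> Max S"
    by (meson order.trans)
qed

theorem mainTheorem13:
  fixes n r i :: nat and A :: mat and \<nu> :: "nat \<Rightarrow> nat"
  assumes "A \<in> Theta n r" and "\<nu> = co n A" and "1 \<le> i" and "i \<le> n - 1"
  shows
   "(\<nu> (i+1) \<ge> 1 \<longrightarrow>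
      ((\<exists>y \<in> (Salg n r :: (mat \<Rightarrow> 'k::field) set). rmult_e n r y i \<nu> = basis_e A)
       \<longleftrightarrow>
       (let s = (if {x. A x i > 0} = {} then \<infinity> else enat (Min {x. A x i > 0}));
            t = Min {x. A x (i+1) > 0}
        in s \<ge> enat t)))
    \<and>
    (\<nu> i \<ge> 1 \<longrightarrow>
      ((\<exists>y \<in> (Salg n r :: (mat \<Rightarrow> 'k::field) set). rmult_f n r y i \<nu> = basis_e A)
       \<longleftrightarrow>
       (let x0 = Max {x. A x i > 0}
        in {x. A x (i+1) > 0} = {} \<or> x0 \<ge> Max {x. A x (i+1) > 0})))"
proof -
  have i: "1 \<le> i" "i < n"
    using assms(3,4) by auto
  have fin: "finite {x. 0 < A x j}" for j
    using finite_column_support[OF assms(1)] .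
  have nonempty: "{x. 0 < A x j} \<noteq> {}" if "1 \<le> co n A j" for j
    using that co_pos_iff[OF assms(1), of j] by auto
  show ?thesis
    unfolding Let_def assms(2)
    using ex_rmult_e_eq_basis_e_iff[OF assms(1) i] ex_rmult_f_eq_basis_e_iff[OF assms(1) i]
      enat_Min_le_iff_ex_before[OF fin fin nonempty] Max_le_Max_iff_ex_after[OF fin nonempty fin]
    by auto
qed

end
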